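(* Let $l$ be odd, $K$ a field of characteristic $0$ and $q\in K$ such that $q^2$ is a primitive $l$-th root of unity. For every $n$ with $2\le n\le l-1$, $$\sum_{i=0}^{l-1}S_{i,n}(1,q^2,q^4,\dots,q^{2(n-1)})=\frac{l}{(1-q^2)(1-q^4)\cdots(1-q^{2(n-1)})},$$ where $S_{d,n}(x_1,\dots,x_n)=\sum_{1\le i_1\le\cdots\le i_d\le n}x_{i_1}\cdots x_{i_d}$ and $S_{0,n}=1$. *)

theory Defs
  imports Main "HOL-Library.FuncSet"
begin

text \<open>Sequences are extensional
  functions {1..d} -> {1..n}; for d = 0 the sum has one empty product, so S_{0,n} = 1.\<close>
definition complete_hom :: "nat \<Rightarrow> nat \<Rightarrow> (nat \<Rightarrow> 'a::comm_ring_1) \<Rightarrow> 'a" where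
  "complete_hom d n x =
     (\<Sum>f \<in> {f. f \<in> {1..d} \<rightarrow>\<^sub>E {1..n} \<and> (\<forall>i\<in>{1..d}. \<forall>j\<in>{1..d}. i \<le> j \<longrightarrow> f i \<le> f j)}.
        \<Prod>k=1..d. x (f k))"

definition primitive_root_of_unity :: "nat \<Rightarrow> 'a::comm_ring_1 \<Rightarrow> bool" where
  "primitive_root_of_unity l z \<longleftrightarrow> 0 < l \<and> z ^ l = 1 \<and> (\<forall>k. 0 < k \<and> k < l \<longrightarrow> z ^ k \<noteq> 1)"

end

theory Submission
  imports Defs
begin

text \<open>
  Put \<open>z = q\<^sup>2\<close> and \<open>h k n = S_{k,n}(1, z, ..., z^(n-1))\<close>.  Splitting off the largest index
  gives \<open>h (k+1) (n+1) = h (k+1) n + z^n h k (n+1)\<close>, and from it the Gaussian-binomial relation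
  \<open>(1 - z^n) h k (n+1) = (1 - z^(k+1)) h (k+1) n\<close>.  As \<open>z^l = 1\<close> but \<open>z^n \<noteq> 1\<close> for
  \<open>0 < n < l\<close>, the latter forces \<open>h (l-1) (n+1) = 0\<close>, so summing the former over \<open>k < l\<close>
  gives \<open>A (n+1) = A n + z^n A (n+1)\<close> for \<open>A n = \<Sum>k<l. h k n\<close>; and \<open>A 1 = l\<close>.
\<close>

definition mono_seqs :: "nat \<Rightarrow> nat \<Rightarrow> (nat \<Rightarrow> nat) set" where
  "mono_seqs d n = {f. f \<in> {1..d} \<rightarrow>\<^sub>E {1..n} \<and> (\<forall>i\<in>{1..d}. \<forall>j\<in>{1..d}. i \<le> j \<longrightarrow> f i \<le> f j)}"

lemma finite_mono_seqs: "finite (mono_seqs d n)"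
  by (rule finite_subset[of _ "{1..d} \<rightarrow>\<^sub>E {1..n}"]) (auto simp: mono_seqs_def intro: finite_PiE)

lemma complete_hom_eq_sum_mono_seqs:
  "complete_hom d n x = (\<Sum>f\<in>mono_seqs d n. \<Prod>k=1..d. x (f k))"
  by (simp add: complete_hom_def mono_seqs_def)

lemma mono_seqs_Suc_Suc:
  "mono_seqs (Suc d) (Suc n) = mono_seqs (Suc d) n \<union> (\<lambda>g. g(Suc d := Suc n)) ` mono_seqs d (Suc n)"
    (is "?L = ?R")
proof
  show "?L \<subseteq> ?R"
  proof
    fix f assume f: "f \<in> ?L"
    show "f \<in> ?R"
    proof (cases "f (Suc d) = Suc n")
      case True
      then have "f = (f(Suc d := undefined))(Suc d := Suc n)" by (simp add: fun_eq_iff)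
      moreover have "f(Suc d := undefined) \<in> mono_seqs d (Suc n)"
        using f by (auto simp: mono_seqs_def PiE_def Pi_def extensional_def)
      ultimately show ?thesis by blast
    next
      case False
      with f have "f (Suc d) \<le> n" by (auto simp: mono_seqs_def PiE_def Pi_def le_Suc_eq)
      moreover have "f k \<le> f (Suc d)" if "k \<in> {1..Suc d}" for k
        using f that by (simp add: mono_seqs_def)
      ultimately show ?thesis using f by (force simp: mono_seqs_def PiE_def Pi_def)
    qed
  qed
  show "?R \<subseteq> ?L"
    by (auto simp: mono_seqs_def PiE_def Pi_def extensional_def le_Suc_eq)
qed

lemma complete_hom_0 [simp]: "complete_hom 0 n x = 1"
proof -
  have "mono_seqs 0 n = {\<lambda>_. undefined}" by (auto simp: mono_seqs_def)
  then show ?thesis by (simp add: complete_hom_eq_sum_mono_seqs)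
qed

lemma complete_hom_Suc_0 [simp]: "complete_hom (Suc d) 0 x = 0"
proof -
  have "mono_seqs (Suc d) 0 = {}" by (auto simp: mono_seqs_def PiE_def Pi_def)
  then show ?thesis by (simp add: complete_hom_eq_sum_mono_seqs)
qed

lemma complete_hom_Suc_Suc:
  "complete_hom (Suc d) (Suc n) x = complete_hom (Suc d) n x + x (Suc n) * complete_hom d (Suc n) x"
proof -
  let ?ext = "\<lambda>g. g(Suc d := Suc n)"
  have disjoint: "mono_seqs (Suc d) n \<inter> ?ext ` mono_seqs d (Suc n) = {}"
    by (auto simp: mono_seqs_def PiE_def Pi_def)
  have "inj_on ?ext (mono_seqs d (Suc n))"
  proof (rule inj_onI)
    fix a b assume "a \<in> mono_seqs d (Suc n)" "b \<in> mono_seqs d (Suc n)" "?ext a = ?ext b"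
    moreover from calculation(1,2) have "a (Suc d) = b (Suc d)"
      by (auto simp: mono_seqs_def PiE_def extensional_def)
    ultimately show "a = b" by (metis fun_upd_triv fun_upd_upd)
  qed
  then have "(\<Sum>f\<in>?ext ` mono_seqs d (Suc n). \<Prod>k=1..Suc d. x (f k))
      = (\<Sum>g\<in>mono_seqs d (Suc n). \<Prod>k=1..Suc d. x (?ext g k))"
    by (rule sum.reindex[unfolded comp_def])
  also have "\<dots> = (\<Sum>g\<in>mono_seqs d (Suc n). x (Suc n) * (\<Prod>k=1..d. x (g k)))"
    by (intro sum.cong refl) (simp add: prod.nat_ivl_Suc')
  finally show ?thesis
    unfolding complete_hom_eq_sum_mono_seqs mono_seqs_Suc_Suc
    by (simp add: sum.union_disjoint finite_mono_seqs disjoint sum_distrib_left)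
qed

definition principal_complete_hom :: "'a::comm_ring_1 \<Rightarrow> nat \<Rightarrow> nat \<Rightarrow> 'a" where
  "principal_complete_hom z k n = complete_hom k n (\<lambda>j. z ^ (j - 1))"

lemma principal_complete_hom_0 [simp]: "principal_complete_hom z 0 n = 1"
  by (simp add: principal_complete_hom_def)

lemma principal_complete_hom_Suc_0 [simp]: "principal_complete_hom z (Suc k) 0 = 0"
  by (simp add: principal_complete_hom_def)

lemma principal_complete_hom_Suc_Suc:
  "principal_complete_hom z (Suc k) (Suc n)
     = principal_complete_hom z (Suc k) n + z ^ n * principal_complete_hom z k (Suc n)"
  by (simp add: principal_complete_hom_def complete_hom_Suc_Suc)

lemma principal_complete_hom_Suc_0_right [simp]: "principal_complete_hom z k (Suc 0) = 1"
  by (induction k) (simp_all add: principal_complete_hom_Suc_Suc)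

lemma principal_complete_hom_geometric:
  "(1 - z) * principal_complete_hom z (Suc 0) n = 1 - z ^ n"
proof (induction n)
  case (Suc n)
  have "(1 - z) * principal_complete_hom z (Suc 0) (Suc n)
      = (1 - z) * principal_complete_hom z (Suc 0) n + (1 - z) * z ^ n"
    by (simp add: principal_complete_hom_Suc_Suc distrib_left)
  also have "\<dots> = 1 - z ^ Suc n"
    using Suc.IH by (simp add: algebra_simps)
  finally show ?case .
qed simp

lemma principal_complete_hom_shift:
  "(1 - z ^ n) * principal_complete_hom z k (Suc n) = (1 - z ^ Suc k) * principal_complete_hom z (Suc k) n"
proof (induction k arbitrary: n)
  case 0
  then show ?case by (simp add: principal_complete_hom_geometric)
next
  case (Suc k)
  note shift_k = Suc.IH
  let ?h = "principal_complete_hom z"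
  show ?case
  proof (induction n)
    case 0
    then show ?case by simp
  next
    case (Suc m)
    have "(1 - z ^ Suc m) * ?h (Suc k) (Suc (Suc m))
        = (1 - z ^ Suc m) * ?h (Suc k) (Suc m) + z ^ Suc m * ((1 - z ^ Suc m) * ?h k (Suc (Suc m)))"
      by (simp add: principal_complete_hom_Suc_Suc algebra_simps)
    also have "\<dots> = (1 - z ^ Suc m) * ?h (Suc k) (Suc m) + z ^ Suc m * ((1 - z ^ Suc k) * ?h (Suc k) (Suc m))"
      by (simp only: shift_k)
    also have "\<dots> = (1 - z ^ m) * ?h (Suc k) (Suc m) + z ^ m * ((1 - z ^ Suc (Suc k)) * ?h (Suc k) (Suc m))"
      by (simp add: algebra_simps)
    also have "\<dots> = (1 - z ^ Suc (Suc k)) * ?h (Suc (Suc k)) m + z ^ m * ((1 - z ^ Suc (Suc k)) * ?h (Suc k) (Suc m))"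
      by (simp only: Suc.IH)
    also have "\<dots> = (1 - z ^ Suc (Suc k)) * ?h (Suc (Suc k)) (Suc m)"
      by (simp add: principal_complete_hom_Suc_Suc algebra_simps)
    finally show ?case .
  qed
qed

lemma principal_complete_hom_eq_0:
  fixes z :: "'a::idom"
  assumes "z ^ Suc k = 1" and "z ^ n \<noteq> 1"
  shows "principal_complete_hom z k (Suc n) = 0"
  using principal_complete_hom_shift[of z n k] assms by simp

lemma sum_principal_complete_hom_Suc:
  "(\<Sum>k<Suc m. principal_complete_hom z k (Suc n))
     = (\<Sum>k<Suc m. principal_complete_hom z k n) + z ^ n * (\<Sum>k<m. principal_complete_hom z k (Suc n))"
  by (simp add: sum.lessThan_Suc_shift principal_complete_hom_Suc_Suc sum.distrib sum_distrib_left
           del: sum.lessThan_Suc)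

lemma sum_principal_complete_hom_root_of_unity:
  fixes z :: "'a::field"
  assumes root: "primitive_root_of_unity l z" and "0 < n" and "n < l"
  shows "(\<Sum>k<l. principal_complete_hom z k n) = of_nat l / (\<Prod>j=1..n-1. (1 - z ^ j))"
  using \<open>0 < n\<close> \<open>n < l\<close>
proof (induction n rule: nat_induct_non_zero)
  case 1
  then show ?case by simp
next
  case (Suc n)
  let ?A = "\<lambda>n. \<Sum>k<l. principal_complete_hom z k n"
  obtain m where l: "l = Suc m" using Suc.prems by (cases l) auto
  have zn: "1 - z ^ n \<noteq> 0"
    using root Suc by (auto simp: primitive_root_of_unity_def)
  have "principal_complete_hom z m (Suc n) = 0"
    using root zn l by (intro principal_complete_hom_eq_0) (auto simp: primitive_root_of_unity_def)
  then have "?A (Suc n) = ?A n + z ^ n * ?A (Suc n)"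
    using sum_principal_complete_hom_Suc[where z = z and m = m and n = n] l by simp
  then have "?A (Suc n) = ?A n / (1 - z ^ n)"
    using zn by (simp add: eq_divide_eq algebra_simps)
  moreover have "(\<Prod>j=1..n. (1 - z ^ j)) = (\<Prod>j=1..n-1. (1 - z ^ j)) * (1 - z ^ n)"
    using \<open>0 < n\<close> by (metis Suc_diff_1 mult.commute prod.nat_ivl_Suc' le_add1 plus_1_eq_Suc)
  ultimately show ?case
    using Suc by simp
qed

theorem mainTheorem5:
  fixes q :: "'a::field_char_0" and l n :: nat
  assumes "odd l"
    and "primitive_root_of_unity l (q^2)"
    and "2 \<le> n" and "n \<le> l - 1"
  shows "(\<Sum>i<l. complete_hom i n (\<lambda>j. q ^ (2 * (j - 1))))
         = of_nat l / (\<Prod>j=1..n-1. (1 - q ^ (2 * j)))"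
proof -
  have "0 < n" "n < l" using assms(1,3,4) by (auto elim: oddE)
  then have "(\<Sum>i<l. principal_complete_hom (q^2) i n) = of_nat l / (\<Prod>j=1..n-1. (1 - (q^2) ^ j))"
    using assms(2) by (rule sum_principal_complete_hom_root_of_unity[rotated])
  then show ?thesis
    by (simp add: principal_complete_hom_def power_mult)
qed

end
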